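(* $$\int_{0}^{1}\frac{\log(1-x^2)\,\log(\log x)}{x\sqrt{\log x}}\,dx=\sqrt{\frac{\pi}{2}}\left(i\,\zeta'\!\left(\tfrac32\right)-i\,\zeta\!\left(\tfrac32\right)\big(\gamma-i\pi+\log 8\big)\right),$$ where $\gamma$ is Euler's constant and $\zeta$ the Riemann zeta function.
   Context: For $x\in(0,1)$, $\log(\log x)=\log|\log x|+i\pi$ and $\sqrt{\log x}=e^{\frac12\log(\log x)}=i\sqrt{|\log x|}$ (principal branches). *)

theory Defs
  imports "HOL-Analysis.Analysis"
begin

text \<open>Riemann zeta function via its Dirichlet series, valid (and used only) on the
  half-plane Re s > 1, which is an open neighbourhood of 3/2; hence its complex
  derivative there is the true derivative of the Riemann zeta function.\<close>
definition riemann_zeta :: "complex \<Rightarrow> complex" where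
  "riemann_zeta s = (\<Sum>n. 1 / (of_nat (Suc n)) powr s)"

end

theory Submission
  imports Defs
begin

text \<open>Substituting \<open>x = exp (-t)\<close> and using \<open>Ln (ln x) = Ln (-t) = ln t + \<i> pi\<close>,
  \<open>sqrt (ln x) = \<i> sqrt t\<close>, the integral becomes that of
  \<open>-\<i> ln (1 - exp (-2t)) (ln t + \<i> pi) / sqrt t\<close> over \<open>t > 0\<close>.  Expanding
  \<open>-ln (1 - exp (-2t)) = \<Sum>n\<ge>1. exp (-2nt) / n\<close> and integrating term by term with
  \<open>\<integral> t^(-1/2) exp (-ct) (ln t + \<i> pi) dt = sqrt (pi / c) (\<psi>(1/2) - ln c + \<i> pi)\<close>,
  where \<open>\<psi>(1/2) = -\<gamma> - 2 ln 2\<close>, produces the Dirichlet series of \<open>\<zeta>(3/2)\<close> and \<open>\<zeta>'(3/2)\<close>.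
  The logarithmic Gamma integral is Euler's integral differentiated under the integral sign
  (dominated convergence of difference quotients); the exchange of sum and integral is justified
  by \<open>\<integral> |n-th term| = O(n^(-11/8))\<close>.\<close>

lemma abs_ln_le_powr:
  fixes t e :: real
  assumes t: "t > 0" and e: "e > 0"
  shows "e * \<bar>ln t\<bar> + 1 \<le> t powr e + t powr (-e)"
proof (cases "ln t \<ge> 0")
  case True
  have "1 + e * ln t \<le> t powr e"
    using exp_ge_add_one_self[of "e * ln t"] t by (simp add: powr_def)
  then show ?thesis
    by (subst abs_of_nonneg[OF True]) (use powr_ge_zero[of t "-e"] in linarith)
next
  case False
  have "1 + (-e) * ln t \<le> t powr (-e)"
    using exp_ge_add_one_self[of "(-e) * ln t"] t by (simp add: powr_def)
  then show ?thesis
    by (subst abs_of_neg) (use False powr_ge_zero[of t e] in linarith)+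
qed

lemma abs_powr_difference_quotient_le:
  fixes t h H :: real
  assumes t: "t > 0" and h: "0 < h" "h \<le> H"
  shows "\<bar>(t powr h - 1) / h\<bar> \<le> \<bar>ln t\<bar> * (1 + t powr H)"
proof -
  define x where "x = h * ln t"
  have tx: "t powr h = exp x" using t by (simp add: powr_def x_def)
  show ?thesis
  proof (cases "ln t \<ge> 0")
    case True
    have x: "x \<ge> 0" using True h by (simp add: x_def)
    have "exp x * (1 - x) \<le> exp x * exp (-x)"
      using exp_ge_add_one_self[of "-x"] by (intro mult_left_mono) auto
    then have "exp x - 1 \<le> x * exp x" by (simp add: exp_minus algebra_simps)
    also have "\<dots> \<le> x * t powr H"
      using x True h t by (intro mult_left_mono) (simp_all add: x_def powr_def mult_right_mono)
    finally have "(exp x - 1) / h \<le> ln t * t powr H"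
      using h by (simp add: x_def pos_divide_le_eq mult_ac)
    moreover have "exp x \<ge> 1" using x by simp
    ultimately have "\<bar>(exp x - 1) / h\<bar> \<le> ln t * t powr H"
      using h by simp
    also have "\<dots> \<le> \<bar>ln t\<bar> * (1 + t powr H)" using True by (simp add: algebra_simps)
    finally show ?thesis by (simp add: tx)
  next
    case False
    have "x \<le> 0" using False h by (simp add: x_def mult_nonneg_nonpos)
    then have "\<bar>exp x - 1\<bar> \<le> - x" by (smt (verit) exp_ge_add_one_self exp_le_one_iff)
    then have "\<bar>exp x - 1\<bar> \<le> h * \<bar>ln t\<bar>" using False h by (simp add: x_def)
    then have "\<bar>exp x - 1\<bar> / h \<le> h * \<bar>ln t\<bar> / h"
      using h by (intro divide_right_mono) auto
    then have "\<bar>(exp x - 1) / h\<bar> \<le> \<bar>ln t\<bar>" using h by simp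
    also have "\<dots> \<le> \<bar>ln t\<bar> * (1 + t powr H)" by (simp add: mult_le_cancel_left1)
    finally show ?thesis by (simp add: tx)
  qed
qed

lemma ln_one_minus_sums:
  fixes x :: real
  assumes "0 \<le> x" "x < 1"
  shows "(\<lambda>k. x ^ Suc k / real (Suc k)) sums - ln (1 - x)"
proof -
  have "(\<lambda>n. - ((- (- x)) ^ n) / of_nat n) sums ln (1 + - x)"
    by (rule ln_series') (use assms in simp)
  then have "(\<lambda>n. x ^ n / real n) sums - ln (1 - x)"
    using sums_minus by fastforce
  then show ?thesis by (subst sums_Suc_iff) simp
qed

lemma summable_powr_div_Suc:
  fixes p c :: real
  assumes "p > 0" and "c > 0"
  shows "summable (\<lambda>k. (c * real (Suc k)) powr (-p) / real (Suc k))"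
proof -
  have "summable (\<lambda>n. real n powr (-(p + 1)))"
    using assms by (simp add: summable_real_powr_iff)
  then have "summable (\<lambda>k. c powr (-p) * real (Suc k) powr (-(p + 1)))"
    by (subst summable_Suc_iff) (rule summable_mult)
  moreover have "(c * real (Suc k)) powr (-p) / real (Suc k)
      = c powr (-p) * real (Suc k) powr (-(p + 1))" for k
    using powr_diff[of "real (Suc k)" "-p" 1] assms(2) by (simp add: powr_mult)
  ultimately show ?thesis by simp
qed

lemma DERIV_difference_quotient_sequentially:
  fixes f :: "'a::real_normed_field \<Rightarrow> 'a"
  assumes "(f has_field_derivative D) (at x)" and "h \<longlonglongrightarrow> 0" and "\<And>n. h n \<noteq> 0"
  shows "(\<lambda>n. (f (x + h n) - f x) / h n) \<longlonglongrightarrow> D"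
proof -
  have "((\<lambda>y. (f y - f x) / (y - x)) \<longlongrightarrow> D) (at x)"
    using assms(1) by (simp add: has_field_derivative_iff)
  moreover have "filterlim (\<lambda>n. x + h n) (at x) sequentially"
    using assms(2,3) by (auto simp: filterlim_at intro!: always_eventually tendsto_eq_intros)
  ultimately show ?thesis by (auto dest: filterlim_compose)
qed

lemma continuous_bounded_by_integrable_imp_absolutely_integrable:
  fixes f :: "'a::euclidean_space \<Rightarrow> 'b::euclidean_space"
  assumes "continuous_on S f" "S \<in> sets lebesgue" "g integrable_on S"
    and "\<And>x. x \<in> S \<Longrightarrow> norm (f x) \<le> g x"
  shows "f absolutely_integrable_on S"
  using assms by (intro measurable_bounded_by_integrable_imp_absolutely_integrable
      continuous_imp_measurable_on_sets_lebesgue)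

lemma absolutely_integrable_sums:
  fixes f :: "nat \<Rightarrow> 'a::euclidean_space \<Rightarrow> 'b::euclidean_space"
  assumes f: "\<And>k. f k absolutely_integrable_on S"
    and sums: "\<And>t. t \<in> S \<Longrightarrow> (\<lambda>k. f k t) sums F t"
    and norm_summable: "\<And>t. t \<in> S \<Longrightarrow> summable (\<lambda>k. norm (f k t))"
    and integral_norm_summable: "summable (\<lambda>k. integral S (\<lambda>t. norm (f k t)))"
  shows "F absolutely_integrable_on S" and "(\<lambda>k. integral S (f k)) sums integral S F"
proof -
  define g where "g k t = indicator S t *\<^sub>R f k t" for k t
  have g: "integrable lebesgue (g k)" for k
    using f[of k] unfolding set_integrable_def g_def .
  have ae: "AE t in lebesgue. summable (\<lambda>k. norm (g k t))"
    using norm_summable by (intro AE_I2) (auto simp: g_def indicator_def)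
  have summable: "summable (\<lambda>k. \<integral>t. norm (g k t) \<partial>lebesgue)"
  proof -
    have "(\<integral>t. norm (g k t) \<partial>lebesgue) = integral S (\<lambda>t. norm (f k t))" for k
    proof -
      have "(\<integral>t. norm (g k t) \<partial>lebesgue) = set_lebesgue_integral lebesgue S (\<lambda>t. norm (f k t))"
        unfolding set_lebesgue_integral_def g_def
        by (intro Bochner_Integration.integral_cong) (auto simp: indicator_def)
      also have "\<dots> = integral S (\<lambda>t. norm (f k t))"
        by (rule set_lebesgue_integral_eq_integral(2)[OF set_integrable_norm[OF f]])
      finally show ?thesis .
    qed
    then show ?thesis using integral_norm_summable by simp
  qed
  have sum_g: "(\<lambda>t. \<Sum>k. g k t) = (\<lambda>t. indicator S t *\<^sub>R F t)"
    using sums by (auto simp: g_def fun_eq_iff indicator_def sums_iff)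
  have F_int: "integrable lebesgue (\<lambda>t. indicator S t *\<^sub>R F t)"
    and "(\<lambda>k. integral\<^sup>L lebesgue (g k)) sums (\<integral>t. indicator S t *\<^sub>R F t \<partial>lebesgue)"
    using integrable_suminf[where f = g, OF g ae summable]
      sums_integral[where f = g, OF g ae summable] by (simp_all add: sum_g)
  then show F: "F absolutely_integrable_on S" and "(\<lambda>k. integral S (f k)) sums integral S F"
    using set_lebesgue_integral_eq_integral(2)[OF f]
      set_lebesgue_integral_eq_integral(2)[of S F, unfolded set_integrable_def, OF F_int]
    unfolding set_integrable_def set_lebesgue_integral_def g_def by simp_all
qed

lemma has_absolute_integral_Ioi_scale:
  fixes f :: "real \<Rightarrow> 'a::euclidean_space"
  assumes f: "f absolutely_integrable_on {0<..}" "(f has_integral I) {0<..}" and c: "c > 0"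
  shows "(\<lambda>t. f (c * t)) absolutely_integrable_on {0<..}"
    and "((\<lambda>t. f (c * t)) has_integral I /\<^sub>R c) {0<..}"
proof -
  have image: "(\<lambda>t. c * t) ` {0<..} = {0<..}"
  proof safe
    fix x :: real assume "x > 0"
    then show "x \<in> (\<lambda>t. c * t) ` {0<..}" using c by (intro image_eqI[of _ _ "x / c"]) auto
  qed (use c in auto)
  have "(\<lambda>t. \<bar>c\<bar> *\<^sub>R f (c * t)) absolutely_integrable_on {0<..}
          \<and> integral {0<..} (\<lambda>t. \<bar>c\<bar> *\<^sub>R f (c * t)) = I
        \<longleftrightarrow> f absolutely_integrable_on (\<lambda>t. c * t) ` {0<..}
          \<and> integral ((\<lambda>t. c * t) ` {0<..}) f = I"
    by (rule has_absolute_integral_change_of_variables_real)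
       (use c in \<open>auto intro!: derivative_eq_intros inj_onI\<close>)
  with f c image have scaled: "(\<lambda>t. c *\<^sub>R f (c * t)) absolutely_integrable_on {0<..}"
    "integral {0<..} (\<lambda>t. c *\<^sub>R f (c * t)) = I"
    by (auto simp: integral_unique)
  have "(\<lambda>t. inverse c *\<^sub>R (c *\<^sub>R f (c * t))) absolutely_integrable_on {0<..}"
    using scaled(1) by (rule absolutely_integrable_scaleR_left)
  then show ai: "(\<lambda>t. f (c * t)) absolutely_integrable_on {0<..}" using c by simp
  have "c *\<^sub>R integral {0<..} (\<lambda>t. f (c * t)) = I" using scaled(2) by simp
  then have "integral {0<..} (\<lambda>t. f (c * t)) = I /\<^sub>R c" using c by (auto simp: field_simps)
  with ai show "((\<lambda>t. f (c * t)) has_integral I /\<^sub>R c) {0<..}"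
    by (metis integrable_integral set_lebesgue_integral_eq_integral(1))
qed

lemma has_integral_exp_neg_substitution:
  fixes F :: "real \<Rightarrow> 'a::euclidean_space"
  assumes G: "G absolutely_integrable_on {0<..}" "integral {0<..} G = I"
    and FG: "\<And>t. t > 0 \<Longrightarrow> exp (-t) *\<^sub>R F (exp (-t)) = G t"
  shows "(F has_integral I) {0<..<1}"
proof -
  have image: "(\<lambda>t. exp (-t)) ` {0<..} = {0<..<1::real}"
  proof safe
    fix x :: real assume "x \<in> {0<..<1}"
    then show "x \<in> (\<lambda>t. exp (-t)) ` {0<..}" by (intro image_eqI[of _ _ "- ln x"]) auto
  qed auto
  have "(\<lambda>t. \<bar>- exp (-t)\<bar> *\<^sub>R F (exp (-t))) absolutely_integrable_on {0<..}
        \<and> integral {0<..} (\<lambda>t. \<bar>- exp (-t)\<bar> *\<^sub>R F (exp (-t))) = I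
      \<longleftrightarrow> F absolutely_integrable_on (\<lambda>t. exp (-t)) ` {0<..}
        \<and> integral ((\<lambda>t. exp (-t)) ` {0<..}) F = I"
    by (rule has_absolute_integral_change_of_variables_real)
      (auto intro!: derivative_eq_intros inj_onI)
  moreover have "(\<lambda>t. \<bar>- exp (-t)\<bar> *\<^sub>R F (exp (-t))) absolutely_integrable_on {0<..}"
    using G(1) by (rule absolutely_integrable_spike[OF _ negligible_empty]) (simp add: FG)
  moreover have "integral {0<..} (\<lambda>t. \<bar>- exp (-t)\<bar> *\<^sub>R F (exp (-t))) = I"
    unfolding G(2)[symmetric] by (rule integral_cong) (simp add: FG)
  ultimately have "F absolutely_integrable_on {0<..<1}" and "integral {0<..<1} F = I"
    by (simp_all add: image)
  then show ?thesis by (metis integrable_integral set_lebesgue_integral_eq_integral(1))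
qed

section \<open>Euler's integral and its logarithmic derivative\<close>

lemma has_integral_Gamma_Ioi:
  fixes s :: real
  assumes "s > 0"
  shows "((\<lambda>t. t powr (s - 1) * exp (-t)) has_integral Gamma s) {0<..}"
proof -
  have "((\<lambda>t. t powr (s - 1) / exp t) has_integral Gamma s) {0..}"
    by (rule Gamma_integral_real) fact
  then have "((\<lambda>t. t powr (s - 1) / exp t) has_integral Gamma s) {0<..}"
    by (rule has_integral_spike_set_eq[THEN iffD1, rotated 2])
       (auto intro: negligible_subset[of "{0}"])
  then show ?thesis by (simp add: exp_minus divide_inverse)
qed

lemma has_integral_powr_exp_Ioi:
  fixes s c :: real
  assumes s: "s > 0" and c: "c > 0"
  shows "((\<lambda>t. t powr (s - 1) * exp (-(c * t))) has_integral Gamma s * c powr (-s)) {0<..}"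
proof -
  let ?f = "\<lambda>t. t powr (s - 1) * exp (-t)"
  have "?f absolutely_integrable_on {0<..}"
    using has_integral_Gamma_Ioi[OF s] by (intro nonnegative_absolutely_integrable_1) auto
  from has_absolute_integral_Ioi_scale(2)[OF this has_integral_Gamma_Ioi[OF s] c]
  have "((\<lambda>t. c powr (1 - s) * ?f (c * t)) has_integral c powr (1 - s) * (Gamma s /\<^sub>R c)) {0<..}"
    by (rule has_integral_mult_right)
  moreover have "c powr (1 - s) * ?f (c * t) = t powr (s - 1) * exp (-(c * t))" if "t > 0" for t
    using that c by (simp add: powr_mult powr_diff powr_minus field_simps)
  moreover have "c powr (1 - s) * (Gamma s /\<^sub>R c) = Gamma s * c powr (-s)"
    using c by (simp add: powr_diff powr_minus field_simps)
  ultimately show ?thesis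
    by (metis (no_types, lifting) has_integral_spike_eq[OF negligible_empty] DiffD1 greaterThan_iff)
qed

text \<open>Since \<open>t powr h \<le> 1 + t\<close> for \<open>0 < h \<le> 1\<close>, this dominates the difference quotients
  in \<open>s\<close> of \<open>t powr (s - 1) * exp (-t)\<close>.\<close>

lemma integrable_powr_exp_abs_ln_Ioi:
  fixes s :: real
  assumes s: "s > 0"
  shows "(\<lambda>t. t powr (s - 1) * exp (-t) * (\<bar>ln t\<bar> * (1 + t))) integrable_on {0<..}"
proof -
  define e where "e = s / 2"
  have e: "e > 0" and s_eq: "s = 2 * e" using s by (simp_all add: e_def)
  define g where "g t = (t powr (3 * e - 1) * exp (-t) + t powr (e - 1) * exp (-t)
      + t powr (3 * e) * exp (-t) + t powr e * exp (-t)) / e" for t :: real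
  have "(\<lambda>t. t powr b * exp (-t)) integrable_on {0<..}" if "b > -1" for b :: real
    using has_integral_Gamma_Ioi[of "b + 1"] that by auto
  then have "g integrable_on {0<..}"
    unfolding g_def using e by (intro integrable_on_divide integrable_add) auto
  moreover have "\<bar>t powr (s - 1) * exp (-t) * (\<bar>ln t\<bar> * (1 + t))\<bar> \<le> g t" if t: "t > 0" for t
  proof -
    have "e * \<bar>ln t\<bar> \<le> t powr e + t powr (-e)" using abs_ln_le_powr[OF t e] by linarith
    from mult_right_mono[OF this, of "1 + t"]
    have "\<bar>ln t\<bar> * (1 + t) \<le> (t powr e + t powr (-e)) * (t powr 0 + t powr 1) / e"
      using t e by (simp add: field_simps)
    from mult_left_mono[OF this, of "t powr (s - 1) * exp (-t)"]
    have "t powr (s - 1) * exp (-t) * (\<bar>ln t\<bar> * (1 + t))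
        \<le> exp (-t) * (t powr (s - 1) * (t powr e + t powr (-e)) * (t powr 0 + t powr 1)) / e"
      by (simp add: mult_ac)
    also have "t powr (s - 1) * (t powr e + t powr (-e)) * (t powr 0 + t powr 1)
        = t powr (3 * e - 1) + t powr (e - 1) + t powr (3 * e) + t powr e"
      using t unfolding s_eq
      by (simp only: distrib_left distrib_right powr_add[symmetric]) (simp add: algebra_simps)
    finally show ?thesis
      using t by (simp add: abs_mult g_def ring_distribs mult.commute[of "exp (-t)"])
  qed
  ultimately have "(\<lambda>t. t powr (s - 1) * exp (-t) * (\<bar>ln t\<bar> * (1 + t)))
      absolutely_integrable_on {0<..}"
    by (intro continuous_bounded_by_integrable_imp_absolutely_integrable[where g = g])
      (auto intro!: continuous_intros)
  then show ?thesis using set_lebesgue_integral_eq_integral(1) by blast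
qed

lemma absolutely_integrable_powr_exp_ln_Ioi:
  fixes s :: real
  assumes s: "s > 0"
  shows "(\<lambda>t. t powr (s - 1) * exp (-t) * ln t) absolutely_integrable_on {0<..}"
proof -
  have "norm (t powr (s - 1) * exp (-t) * ln t) \<le> t powr (s - 1) * exp (-t) * (\<bar>ln t\<bar> * (1 + t))"
    if "t \<in> {0<..}" for t
    using that by (simp add: abs_mult mult_left_mono mult_le_cancel_left1)
  then show ?thesis
    by (intro continuous_bounded_by_integrable_imp_absolutely_integrable
        [OF _ _ integrable_powr_exp_abs_ln_Ioi[OF s]])
      (auto intro!: continuous_intros)
qed

lemma has_integral_powr_exp_difference_quotient_Ioi:
  fixes s h :: real
  assumes s: "s > 0" and h: "h > 0"
  shows "((\<lambda>t. t powr (s - 1) * exp (-t) * ((t powr h - 1) / h)) has_integral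
      (Gamma (s + h) - Gamma s) / h) {0<..}"
proof -
  have "((\<lambda>t. (t powr (s + h - 1) * exp (-t) - t powr (s - 1) * exp (-t)) / h)
      has_integral (Gamma (s + h) - Gamma s) / h) {0<..}"
    using s h by (intro has_integral_divide has_integral_diff has_integral_Gamma_Ioi) auto
  moreover have "t powr (s + h - 1) = t powr (s - 1) * t powr h" if "t > 0" for t
    using that by (simp add: algebra_simps flip: powr_add)
  ultimately show ?thesis
    by (elim has_integral_eq[rotated]) (auto simp: field_simps)
qed

lemma has_integral_powr_exp_ln_Ioi:
  fixes s :: real
  assumes s: "s > 0"
  shows "((\<lambda>t. t powr (s - 1) * exp (-t) * ln t) has_integral Gamma s * Digamma s) {0<..}"
proof -
  define h :: "nat \<Rightarrow> real" where "h n = 1 / (real n + 1)" for n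
  have h: "0 < h n" "h n \<le> 1" for n by (auto simp: h_def field_simps)
  have h_ne: "h n \<noteq> 0" for n using h(1)[of n] by simp
  have h_lim: "h \<longlonglongrightarrow> 0" unfolding h_def by real_asymp
  define q where "q n t = t powr (s - 1) * exp (-t) * ((t powr h n - 1) / h n)" for n t
  have q_le: "\<forall>t\<in>{0<..}. norm (q n t) \<le> t powr (s - 1) * exp (-t) * (\<bar>ln t\<bar> * (1 + t))" for n
  proof
    fix t :: real assume "t \<in> {0<..}"
    then have "\<bar>(t powr h n - 1) / h n\<bar> \<le> \<bar>ln t\<bar> * (1 + t)"
      using abs_powr_difference_quotient_le[of t "h n" 1] h by simp
    from mult_left_mono[OF this, of "t powr (s - 1) * exp (-t)"]
    show "norm (q n t) \<le> t powr (s - 1) * exp (-t) * (\<bar>ln t\<bar> * (1 + t))"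
      by (simp add: q_def abs_mult)
  qed
  have q_lim: "\<forall>t\<in>{0<..}. (\<lambda>n. q n t) \<longlonglongrightarrow> t powr (s - 1) * exp (-t) * ln t"
  proof
    fix t :: real assume "t \<in> {0<..}"
    then have "((\<lambda>u. t powr u) has_field_derivative ln t) (at 0)"
      by (auto intro!: derivative_eq_intros)
    from DERIV_difference_quotient_sequentially[OF this h_lim h_ne]
    have "(\<lambda>n. (t powr h n - 1) / h n) \<longlonglongrightarrow> ln t" using \<open>t \<in> {0<..}\<close> by simp
    then show "(\<lambda>n. q n t) \<longlonglongrightarrow> t powr (s - 1) * exp (-t) * ln t"
      unfolding q_def by (intro tendsto_mult_left)
  qed
  have Gamma_lim: "(\<lambda>n. (Gamma (s + h n) - Gamma s) / h n) \<longlonglongrightarrow> Gamma s * Digamma s"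
  proof (rule DERIV_difference_quotient_sequentially[OF _ h_lim h_ne])
    have "s \<notin> \<int>\<^sub>\<le>\<^sub>0" using s nonpos_Ints_nonpos by fastforce
    then show "(Gamma has_field_derivative Gamma s * Digamma s) (at s)"
      by (rule has_field_derivative_Gamma)
  qed
  show ?thesis
    using has_integral_powr_exp_difference_quotient_Ioi[OF s h(1)]
    by (intro has_integral_dominated_convergence[OF _ integrable_powr_exp_abs_ln_Ioi[OF s]
          q_le q_lim Gamma_lim]) (simp add: q_def)
qed

lemma has_integral_powr_exp_ln_scaled_Ioi:
  fixes s c :: real
  assumes s: "s > 0" and c: "c > 0"
  shows "((\<lambda>t. t powr (s - 1) * exp (-(c * t)) * ln t) has_integral
      Gamma s * (Digamma s - ln c) * c powr (-s)) {0<..}"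
proof -
  let ?f = "\<lambda>t. t powr (s - 1) * exp (-t) * ln t"
  have "((\<lambda>t. ?f (c * t)) has_integral (Gamma s * Digamma s) /\<^sub>R c) {0<..}"
    by (rule has_absolute_integral_Ioi_scale(2)[OF absolutely_integrable_powr_exp_ln_Ioi[OF s]
        has_integral_powr_exp_ln_Ioi[OF s] c])
  then have "((\<lambda>t. c powr (1 - s) * ?f (c * t) - ln c * (t powr (s - 1) * exp (-(c * t))))
      has_integral c powr (1 - s) * ((Gamma s * Digamma s) /\<^sub>R c) - ln c * (Gamma s * c powr (-s)))
      {0<..}"
    by (intro has_integral_diff has_integral_mult_right has_integral_powr_exp_Ioi s c)
  moreover have "c powr (1 - s) * ((Gamma s * Digamma s) /\<^sub>R c) - ln c * (Gamma s * c powr (-s))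
      = Gamma s * (Digamma s - ln c) * c powr (-s)"
    using c by (simp add: powr_diff powr_minus field_simps)
  moreover have "c powr (1 - s) * ?f (c * t) - ln c * (t powr (s - 1) * exp (-(c * t)))
      = t powr (s - 1) * exp (-(c * t)) * ln t" if "t \<in> {0<..}" for t
    using that c by (simp add: powr_mult powr_diff ln_mult field_simps)
  ultimately show ?thesis by (metis (no_types, lifting) has_integral_eq)
qed

section \<open>The Dirichlet series of \<open>\<zeta>\<close> and \<open>\<zeta>'\<close>\<close>

lemma norm_inverse_Suc_powr:
  fixes z :: complex
  shows "norm (1 / of_nat (Suc n) powr z) = real (Suc n) powr (- Re z)"
  using norm_powr_real_powr[of "of_nat (Suc n)" z] by (simp add: norm_divide powr_minus_divide)

lemma riemann_zeta_sums:
  assumes "Re s > 1"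
  shows "(\<lambda>n. 1 / of_nat (Suc n) powr s) sums riemann_zeta s"
proof -
  have "summable (\<lambda>n. real (Suc n) powr (- Re s))"
    using assms by (subst summable_Suc_iff) (simp add: summable_real_powr_iff)
  then have "summable (\<lambda>n. norm (1 / of_nat (Suc n) powr s))"
    by (simp only: norm_inverse_Suc_powr)
  then have "summable (\<lambda>n. 1 / of_nat (Suc n) powr s)"
    by (rule summable_norm_cancel)
  then show ?thesis unfolding riemann_zeta_def by (rule summable_sums)
qed

lemma has_field_derivative_inverse_Suc_powr:
  "((\<lambda>z. 1 / of_nat (Suc n) powr z) has_field_derivative
    - Ln (of_nat (Suc n)) / of_nat (Suc n) powr z) (at z within S)"
proof -
  have w: "(of_nat (Suc n) :: complex) \<noteq> 0" by (simp only: of_nat_eq_0_iff)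
  then have "((\<lambda>z. 1 / of_nat (Suc n) powr z) has_field_derivative
      (0 * of_nat (Suc n) powr z - 1 * (Ln (of_nat (Suc n)) * of_nat (Suc n) powr z))
        / (of_nat (Suc n) powr z * of_nat (Suc n) powr z)) (at z within S)"
    by (intro DERIV_divide DERIV_const
        has_field_derivative_at_within[OF has_field_derivative_powr_right[OF w]]) simp
  then show ?thesis using w by simp
qed

lemma norm_Ln_div_Suc_powr_le:
  fixes z :: complex and r :: real
  assumes r: "r > 0" and z: "Re z \<ge> 1 + r"
  shows "norm (Ln (of_nat (Suc n)) / of_nat (Suc n) powr z)
    \<le> real (Suc n) powr (-(1 + r / 2)) / (r / 2)"
proof -
  define m where "m = real (Suc n)"
  have m: "m \<ge> 1" by (simp add: m_def)
  have "r / 2 * ln m \<le> m powr (r / 2)"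
    using abs_ln_le_powr[of m "r / 2"] powr_mono[of "-(r/2)" 0 m] m r by simp
  then have ln_le: "ln m \<le> m powr (r / 2) / (r / 2)" using r by (simp add: field_simps)
  have powr_le: "m powr (- Re z) \<le> m powr (-(1 + r))" using m z by (intro powr_mono) auto
  have "norm (Ln (of_nat (Suc n)) / of_nat (Suc n) powr z) = ln m * m powr (- Re z)"
    using norm_inverse_Suc_powr[of n z]
    by (simp add: m_def norm_divide norm_mult divide_inverse flip: of_nat_Suc)
  also have "\<dots> \<le> m powr (r / 2) / (r / 2) * m powr (-(1 + r))"
    by (rule mult_mono[OF ln_le powr_le]) (use r in auto)
  also have "\<dots> = m powr (-(1 + r / 2)) / (r / 2)"
  proof -
    have "r / 2 + -(1 + r) = -(1 + r / 2)" by simp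
    then have "m powr (r / 2) * m powr (-(1 + r)) = m powr (-(1 + r / 2))"
      by (simp only: powr_add[symmetric])
    then show ?thesis by simp
  qed
  finally show ?thesis by (simp add: m_def)
qed

lemma riemann_zeta_deriv_sums:
  assumes s: "Re s > 1"
  shows "(\<lambda>n. - Ln (of_nat (Suc n)) / of_nat (Suc n) powr s) sums deriv riemann_zeta s"
proof -
  define r where "r = (Re s - 1) / 2"
  have r: "r > 0" using s by (simp add: r_def)
  define f where "f n z = 1 / of_nat (Suc n) powr z" for n and z :: complex
  define f' where "f' n z = - Ln (of_nat (Suc n)) / of_nat (Suc n) powr z" for n and z :: complex
  define M where "M n = real (Suc n) powr (-(1 + r / 2)) / (r / 2)" for n
  have deriv: "(f n has_field_derivative f' n z) (at z within cball s r)"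
    if "z \<in> cball s r" for n z
    unfolding f_def f'_def by (rule has_field_derivative_inverse_Suc_powr)
  have bound: "norm (f' n z) \<le> M n" if "z \<in> cball s r" for n z
  proof -
    from that have "\<bar>Re s - Re z\<bar> \<le> r"
      using abs_Re_le_cmod[of "s - z"] by (simp add: dist_norm)
    from abs_le_D1[OF this] have "Re z \<ge> 1 + r" unfolding r_def by (simp add: field_simps)
    with r show ?thesis
      unfolding f'_def M_def norm_minus_cancel minus_divide_left[symmetric]
      by (rule norm_Ln_div_Suc_powr_le)
  qed
  have "summable (\<lambda>n. real (Suc n) powr (-(1 + r / 2)))"
    using r by (subst summable_Suc_iff) (simp add: summable_real_powr_iff)
  then have "summable M" unfolding M_def by (rule summable_divide)
  have uc: "uniformly_convergent_on (cball s r) (\<lambda>n z. \<Sum>i<n. f' i z)"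
    by (rule Weierstrass_m_test'[OF bound \<open>summable M\<close>])
  have s_in: "s \<in> cball s r" and s_int: "s \<in> interior (cball s r)" using r by auto
  have f'_summable: "summable (\<lambda>n. f' n s)"
    by (rule summable_comparison_test'[OF \<open>summable M\<close> bound[OF s_in]])
  have "summable (\<lambda>n. f n s)"
    using sums_summable[OF riemann_zeta_sums[OF s]] by (simp add: f_def)
  then have "((\<lambda>z. \<Sum>n. f n z) has_field_derivative (\<Sum>n. f' n s)) (at s)"
    by (intro has_field_derivative_series'(2)[OF convex_cball deriv uc s_in _ s_int])
  moreover have "(\<lambda>z. \<Sum>n. f n z) = riemann_zeta"
    by (simp add: fun_eq_iff f_def riemann_zeta_def)
  ultimately have "deriv riemann_zeta s = (\<Sum>n. f' n s)"
    by (simp add: DERIV_imp_deriv)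
  with f'_summable show ?thesis
    by (simp add: f'_def summable_sums)
qed

section \<open>Term-by-term integration\<close>

text \<open>The principal branch gives \<open>Ln (- t) = ln t + \<i>\<pi>\<close> for \<open>t > 0\<close>, so \<open>log_kernel t\<close> is
  \<open>Ln (- t) / sqrt t\<close>; for \<open>x = exp (- t)\<close> it equals \<open>\<i> * Ln (ln x) / sqrt (ln x)\<close>.\<close>

definition log_kernel :: "real \<Rightarrow> complex" where
  "log_kernel t = of_real (t powr (-1/2)) * (of_real (ln t) + \<i> * of_real pi)"

lemma has_integral_exp_log_kernel:
  fixes c :: real
  assumes c: "c > 0"
  shows "((\<lambda>t. of_real (exp (-(c * t))) * log_kernel t) has_integral
      of_real (sqrt (pi / c)) * (of_real (- euler_mascheroni - 2 * ln 2 - ln c) + \<i> * of_real pi))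
      {0<..}"
proof -
  have sqrt_pi_c: "sqrt pi * c powr (-1/2) = sqrt (pi / c)"
    using c by (simp add: powr_minus_divide powr_half_sqrt real_sqrt_divide)
  have "((\<lambda>t. t powr (-1/2) * exp (-(c * t)) * ln t) has_integral
      sqrt (pi / c) * (- euler_mascheroni - 2 * ln 2 - ln c)) {0<..}"
    using has_integral_powr_exp_ln_scaled_Ioi[of "1/2" c] c
    by (simp add: Gamma_one_half_real Digamma_one_half flip: sqrt_pi_c) (simp add: algebra_simps)
  moreover have "((\<lambda>t. t powr (-1/2) * exp (-(c * t))) has_integral sqrt (pi / c)) {0<..}"
    using has_integral_powr_exp_Ioi[of "1/2" c] c
    by (simp add: Gamma_one_half_real flip: sqrt_pi_c)
  ultimately have "((\<lambda>t. of_real (t powr (-1/2) * exp (-(c * t)) * ln t)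
        + \<i> * of_real pi * of_real (t powr (-1/2) * exp (-(c * t)))) has_integral
      of_real (sqrt (pi / c) * (- euler_mascheroni - 2 * ln 2 - ln c))
        + \<i> * of_real pi * of_real (sqrt (pi / c))) {0<..}"
    by (intro has_integral_add has_integral_mult_right has_integral_of_real)
  then show ?thesis
    by (rule has_integral_eq[rotated, OF has_integral_eq_rhs])
      (simp_all add: log_kernel_def algebra_simps)
qed

lemma norm_log_kernel_le:
  fixes t :: real
  assumes t: "t > 0"
  shows "norm (log_kernel t) \<le> 8 * (t powr (-3/8) + t powr (-5/8))"
proof -
  have "norm (of_real (ln t) + \<i> * of_real pi) \<le> \<bar>ln t\<bar> + pi"
    using norm_triangle_ineq[of "of_real (ln t)" "\<i> * of_real pi"] by (simp add: norm_mult)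
  also have "\<dots> \<le> 8 * (t powr (1/8) + t powr (-1/8))"
    using abs_ln_le_powr[OF t, of "1/8"] pi_less_4 by simp
  finally have "t powr (-1/2) * norm (of_real (ln t) + \<i> * of_real pi)
      \<le> t powr (-1/2) * (8 * (t powr (1/8) + t powr (-1/8)))"
    by (simp add: mult_left_mono)
  also have "\<dots> = 8 * (t powr (-3/8) + t powr (-5/8))"
    using t by (simp add: algebra_simps flip: powr_add)
  finally show ?thesis by (simp add: log_kernel_def norm_mult)
qed

lemma exp_log_kernel_absolutely_integrable:
  fixes c :: real
  assumes c: "c > 0"
  shows "(\<lambda>t. of_real (exp (-(c * t))) * log_kernel t) absolutely_integrable_on {0<..}"
    and "integral {0<..} (\<lambda>t. norm (of_real (exp (-(c * t))) * log_kernel t))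
      \<le> 8 * (Gamma (5/8) * c powr -(5/8) + Gamma (3/8) * c powr -(3/8))"
proof -
  define g where "g t = 8 * (t powr (5/8 - 1) * exp (-(c * t)) + t powr (3/8 - 1) * exp (-(c * t)))"
    for t :: real
  have g: "(g has_integral 8 * (Gamma (5/8) * c powr -(5/8) + Gamma (3/8) * c powr -(3/8))) {0<..}"
    unfolding g_def using c
    by (intro has_integral_mult_right has_integral_add has_integral_powr_exp_Ioi) auto
  have le_g: "norm (of_real (exp (-(c * t))) * log_kernel t) \<le> g t" if "t \<in> {0<..}" for t
    using mult_left_mono[OF norm_log_kernel_le, of t "exp (-(c * t))"] that
    by (simp add: g_def norm_mult algebra_simps)
  show ai: "(\<lambda>t. of_real (exp (-(c * t))) * log_kernel t) absolutely_integrable_on {0<..}"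
    using g le_g unfolding log_kernel_def
    by (intro continuous_bounded_by_integrable_imp_absolutely_integrable[where g = g])
      (auto intro!: continuous_intros)
  have "integral {0<..} (\<lambda>t. norm (of_real (exp (-(c * t))) * log_kernel t)) \<le> integral {0<..} g"
    using ai g le_g by (intro integral_le) (auto simp: absolutely_integrable_on_def)
  then show "integral {0<..} (\<lambda>t. norm (of_real (exp (-(c * t))) * log_kernel t))
      \<le> 8 * (Gamma (5/8) * c powr -(5/8) + Gamma (3/8) * c powr -(3/8))"
    using g by (simp add: integral_unique)
qed

text \<open>The summand for \<open>n = k + 1\<close> in \<open>-\<i> ln (1 - exp (-2t)) log_kernel t = \<Sum>n\<ge>1. \<i> exp (-2nt) / n log_kernel t\<close>.\<close>

definition kernel_series_term :: "nat \<Rightarrow> real \<Rightarrow> complex" where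
  "kernel_series_term k t =
    \<i> / of_nat (Suc k) * (of_real (exp (-((2 * real (Suc k)) * t))) * log_kernel t)"

lemma kernel_series_term_eq_power:
  fixes t :: real
  shows "kernel_series_term k t
    = \<i> * of_real (exp (-(2 * t)) ^ Suc k / real (Suc k)) * log_kernel t"
proof -
  have "exp (-((2 * real (Suc k)) * t)) = exp (-(2 * t)) ^ Suc k"
    by (subst exp_of_nat_mult[symmetric]) (simp add: algebra_simps)
  then show ?thesis by (simp add: kernel_series_term_def)
qed

lemma kernel_series_term_sums:
  fixes t :: real
  assumes "t > 0"
  shows "(\<lambda>k. kernel_series_term k t) sums (- \<i> * of_real (ln (1 - exp (-(2 * t)))) * log_kernel t)"
proof -
  have "(\<lambda>k. exp (-(2 * t)) ^ Suc k / real (Suc k)) sums - ln (1 - exp (-(2 * t)))"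
    using assms by (intro ln_one_minus_sums) auto
  from sums_mult2[OF sums_mult[OF sums_of_real[OF this], of \<i>], of "log_kernel t"]
  show ?thesis by (simp add: kernel_series_term_eq_power)
qed

lemma summable_norm_kernel_series_term:
  fixes t :: real
  assumes "t > 0"
  shows "summable (\<lambda>k. norm (kernel_series_term k t))"
proof -
  have "summable (\<lambda>k. exp (-(2 * t)) ^ Suc k / real (Suc k))"
    using assms by (intro sums_summable[OF ln_one_minus_sums]) auto
  then have "summable (\<lambda>k. exp (-(2 * t)) ^ Suc k / real (Suc k) * norm (log_kernel t))"
    by (rule summable_mult2)
  moreover have "norm (kernel_series_term k t)
      = exp (-(2 * t)) ^ Suc k / real (Suc k) * norm (log_kernel t)" for k
    by (simp only: kernel_series_term_eq_power norm_mult norm_ii norm_of_real) simp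
  ultimately show ?thesis by simp
qed

lemma kernel_series_term_integrable:
  "kernel_series_term k absolutely_integrable_on {0<..}"
  unfolding kernel_series_term_def[abs_def]
  by (intro set_integrable_mult_right exp_log_kernel_absolutely_integrable(1)) simp

lemma summable_integral_norm_kernel_series_term:
  "summable (\<lambda>k. integral {0<..} (\<lambda>t. norm (kernel_series_term k t)))"
proof (rule summable_comparison_test)
  let ?b = "\<lambda>k. 8 * Gamma (5/8) * ((2 * real (Suc k)) powr -(5/8) / real (Suc k))
    + 8 * Gamma (3/8) * ((2 * real (Suc k)) powr -(3/8) / real (Suc k))"
  show "summable ?b"
    by (intro summable_add summable_mult summable_powr_div_Suc) auto
  show "\<exists>N. \<forall>k\<ge>N. norm (integral {0<..} (\<lambda>t. norm (kernel_series_term k t))) \<le> ?b k"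
  proof (intro exI allI impI)
    fix k :: nat
    let ?c = "2 * real (Suc k)"
    have "integral {0<..} (\<lambda>t. norm (kernel_series_term k t))
        = integral {0<..} (\<lambda>t. norm (of_real (exp (-(?c * t))) * log_kernel t)) / real (Suc k)"
    proof -
      have "norm (kernel_series_term k t)
          = norm (of_real (exp (-(?c * t))) * log_kernel t) / real (Suc k)" for t
        by (simp only: kernel_series_term_def norm_mult norm_divide norm_ii norm_of_nat) simp
      then show ?thesis by (simp add: integral_divide)
    qed
    also have "\<dots> \<le> 8 * (Gamma (5/8) * ?c powr -(5/8) + Gamma (3/8) * ?c powr -(3/8)) / real (Suc k)"
      by (intro divide_right_mono exp_log_kernel_absolutely_integrable(2)) auto
    also have "\<dots> = ?b k"
      by (simp only: distrib_left add_divide_distrib times_divide_eq_right mult.assoc)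
    finally have "integral {0<..} (\<lambda>t. norm (kernel_series_term k t)) \<le> ?b k" .
    moreover have "integral {0<..} (\<lambda>t. norm (kernel_series_term k t)) \<ge> 0"
      using kernel_series_term_integrable
      by (intro integral_nonneg) (auto simp: absolutely_integrable_on_def)
    ultimately show "norm (integral {0<..} (\<lambda>t. norm (kernel_series_term k t))) \<le> ?b k"
      by simp
  qed
qed

lemma has_integral_kernel_series_term:
  "(kernel_series_term k has_integral
    \<i> / of_nat (Suc k) * of_real (sqrt (pi / (2 * real (Suc k))))
      * (of_real (- euler_mascheroni - 2 * ln 2 - ln (2 * real (Suc k))) + \<i> * of_real pi))
    {0<..}"
  using has_integral_mult_right[OF has_integral_exp_log_kernel[of "2 * real (Suc k)"],
      of "\<i> / of_nat (Suc k)"]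
  by (simp add: kernel_series_term_def[abs_def] mult.assoc)

lemma integral_kernel_series_term:
  "integral {0<..} (kernel_series_term k) = of_real (sqrt (pi / 2)) *
    (\<i> * (- Ln (of_nat (Suc k)) / of_nat (Suc k) powr (3/2))
     - \<i> * (1 / of_nat (Suc k) powr (3/2))
       * (of_real euler_mascheroni - \<i> * of_real pi + of_real (ln 8)))"
proof -
  define x where "x = real (Suc k)"
  have x: "x > 0" by (simp add: x_def)
  have "(of_nat (Suc k) :: complex) powr (3/2) = of_real (x powr (3/2))"
    using powr_of_real[of x "3/2"] x by (simp add: x_def)
  also have "x powr (3/2) = x * sqrt x"
    using powr_add[of x 1 "1/2"] x by (simp add: powr_half_sqrt)
  finally have powr: "(of_nat (Suc k) :: complex) powr (3/2) = of_real (x * sqrt x)" .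
  have Ln: "Ln (of_nat (Suc k)) = of_real (ln x)" unfolding x_def by (rule Ln_of_nat) simp
  have "integral {0<..} (kernel_series_term k) = \<i> / of_real x * of_real (sqrt (pi / (2 * x)))
      * (of_real (- euler_mascheroni - 2 * ln 2 - ln (2 * x)) + \<i> * of_real pi)"
    using integral_unique[OF has_integral_kernel_series_term[of k]] by (simp add: x_def)
  also have "\<dots> = of_real (sqrt (pi / 2)) *
    (\<i> * (- of_real (ln x) / of_real (x * sqrt x))
     - \<i> * (1 / of_real (x * sqrt x))
       * (of_real euler_mascheroni - \<i> * of_real pi + of_real (ln 8)))"
  proof -
    have sqrt: "sqrt (pi / (2 * x)) = sqrt (pi / 2) / sqrt x"
      by (simp add: real_sqrt_divide real_sqrt_mult)
    have ln: "ln (2 * x) = ln 2 + ln x" "ln (8 :: real) = 3 * ln 2"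
      using x ln_realpow[of 2 3] by (simp_all add: ln_mult)
    have "sqrt x \<noteq> 0" using x by simp
    then show ?thesis unfolding sqrt ln using x by (simp add: field_simps)
  qed
  finally show ?thesis by (simp only: powr Ln)
qed

lemma sums_integral_kernel_series_term:
  "(\<lambda>k. integral {0<..} (kernel_series_term k)) sums
    (of_real (sqrt (pi / 2)) * (\<i> * deriv riemann_zeta (3/2) - \<i> * riemann_zeta (3/2) *
      (of_real euler_mascheroni - \<i> * of_real pi + of_real (ln 8))))"
  unfolding integral_kernel_series_term
  by (intro sums_mult sums_diff sums_mult2 riemann_zeta_sums riemann_zeta_deriv_sums) simp_all

lemma integrand_exp_neg_eq:
  fixes t :: real
  assumes t: "t > 0"
  shows "exp (-t) *\<^sub>R (of_real (ln (1 - (exp (-t))\<^sup>2)) * Ln (of_real (ln (exp (-t))))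
      / (of_real (exp (-t)) * exp (Ln (of_real (ln (exp (-t)))) / 2)))
    = - \<i> * of_real (ln (1 - exp (-(2 * t)))) * log_kernel t"
proof -
  have Ln: "Ln (of_real (ln (exp (-t)))) = of_real (ln t) + \<i> * of_real pi"
    using Ln_of_real'[of "-t"] t by (simp add: mult.commute)
  have "exp ((of_real (ln t) + \<i> * of_real pi) / 2) = exp (of_real (ln t / 2)) * exp (\<i> * of_real (pi / 2))"
    by (simp add: exp_add[symmetric] add_divide_distrib)
  also have "\<dots> = of_real (sqrt t) * \<i>"
  proof -
    have "exp (ln t / 2) = sqrt t" using t by (simp add: powr_half_sqrt[symmetric] powr_def)
    then have "exp (of_real (ln t / 2)) = (of_real (sqrt t) :: complex)"
      by (simp only: exp_of_real)
    moreover have "exp (\<i> * of_real (pi / 2)) = \<i>"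
      using cis_conv_exp[of "pi / 2"] by simp
    ultimately show ?thesis by simp
  qed
  finally have sqrt: "exp ((of_real (ln t) + \<i> * of_real pi) / 2) = of_real (sqrt t) * \<i>" .
  have sq: "(exp (-t))\<^sup>2 = exp (-(2 * t))" by (simp add: power2_eq_square exp_add[symmetric])
  have powr: "t powr (-1/2) = 1 / sqrt t" using t by (simp add: powr_minus_divide powr_half_sqrt)
  have "sqrt t \<noteq> 0" "exp (-t) \<noteq> 0" using t by auto
  then show ?thesis
    unfolding Ln sqrt sq log_kernel_def powr by (simp add: field_simps scaleR_conv_of_real)
qed

theorem mainTheorem16:
  shows "((\<lambda>x::real. complex_of_real (ln (1 - x\<^sup>2)) * Ln (complex_of_real (ln x))
            / (complex_of_real x * exp (Ln (complex_of_real (ln x)) / 2)))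
         has_integral
          (complex_of_real (sqrt (pi / 2)) *
            (\<i> * deriv riemann_zeta (3/2)
             - \<i> * riemann_zeta (3/2) *
               (complex_of_real euler_mascheroni - \<i> * complex_of_real pi + complex_of_real (ln 8)))))
         {0<..<1}"
proof -
  let ?G = "\<lambda>t. - \<i> * of_real (ln (1 - exp (-(2 * t)))) * log_kernel t"
  have "?G absolutely_integrable_on {0<..}"
    and "(\<lambda>k. integral {0<..} (kernel_series_term k)) sums integral {0<..} ?G"
    using absolutely_integrable_sums[OF kernel_series_term_integrable kernel_series_term_sums
        summable_norm_kernel_series_term summable_integral_norm_kernel_series_term]
    by simp_all
  moreover note sums_integral_kernel_series_term
  ultimately show ?thesis
    by (intro has_integral_exp_neg_substitution[where G = ?G] integrand_exp_neg_eq)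
      (simp_all add: sums_unique2)
qed
end
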